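(* Let $A, B, C, F \in \mathbb{R}^{n\times n}$ with $C$ invertible, and consider the matrix equation $$AX + B\lvert CX\rvert = F$$ in the unknown $X \in \mathbb{R}^{n\times n}$. Let $I$ be the $n\times n$ identity matrix and set $R = I\otimes AC^{-1}$ and $S = I\otimes B$ (matrices of size $n^2\times n^2$). The equation has exactly one solution if any one of the following holds: (i) the set $\{R+S,\ R-S\}$ has the column $\mathcal{W}$-property; (ii) $R+S$ is invertible and the set $\{I_{n^2},\ (R+S)^{-1}(R-S)\}$ has the column $\mathcal{W}$-property, where $I_{n^2}$ is the identity matrix of order $n^2$; (iii) $R+S$ is invertible and $(R+S)^{-1}(R-S)$ is a P-matrix; (iv) for all nonnegative diagonal matrices $F_1, F_2 \in \mathbb{R}^{n^2\times n^2}$ with all diagonal entries of $F_1+F_2$ positive, the matrix $(R+S)F_1 + (R-S)F_2$ is invertible.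
   Context: $\otimes$ denotes the Kronecker product and $\lvert M\rvert$ the entrywise absolute value. For a set $\mathcal{M}=\{M_1,M_2\}$ of $N\times N$ matrices, a column representative of $\mathcal{M}$ is a matrix $R'$ whose $j$-th column is either the $j$-th column of $M_1$ or the $j$-th column of $M_2$, for each $j=1,\dots,N$. The set $\mathcal{M}$ has the column $\mathcal{W}$-property if every column representative of $\mathcal{M}$ has positive determinant. A P-matrix is a square matrix all of whose principal minors are positive. *)

theory Defs
  imports "HOL-Analysis.Analysis"
begin

definition kron :: "real^'n^'n \<Rightarrow> real^'m^'m \<Rightarrow> real^('n \<times> 'm)^('n \<times> 'm)" where
  "kron M N = (\<chi> p q. M $ fst p $ fst q * N $ snd p $ snd q)"

definition mabs :: "real^'n^'m \<Rightarrow> real^'n^'m" where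
  "mabs M = (\<chi> i j. \<bar>M $ i $ j\<bar>)"

definition column_rep :: "real^'n^'n \<Rightarrow> real^'n^'n \<Rightarrow> ('n \<Rightarrow> bool) \<Rightarrow> real^'n^'n" where
  "column_rep M1 M2 s = (\<chi> i j. if s j then M1 $ i $ j else M2 $ i $ j)"

definition column_W_property :: "real^'n^'n \<Rightarrow> real^'n^'n \<Rightarrow> bool" where
  "column_W_property M1 M2 \<longleftrightarrow> (\<forall>s. det (column_rep M1 M2 s) > 0)"

definition principal_minor :: "real^'n^'n \<Rightarrow> 'n set \<Rightarrow> real" where
  "principal_minor M J =
     sum (\<lambda>p. of_int (sign p) * prod (\<lambda>i. M $ i $ p i) J) {p. p permutes J}"

definition P_matrix :: "real^'n^'n \<Rightarrow> bool" where
  "P_matrix M \<longleftrightarrow> (\<forall>J. J \<noteq> {} \<longrightarrow> principal_minor M J > 0)"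

definition nonneg_diagonal :: "real^'n^'n \<Rightarrow> bool" where
  "nonneg_diagonal D \<longleftrightarrow> (\<forall>i j. i \<noteq> j \<longrightarrow> D $ i $ j = 0) \<and> (\<forall>i. D $ i $ i \<ge> 0)"

end

theory Submission
  imports Defs "HOL-Homology.Invariance_of_Domain"
begin

text \<open>
Put \<open>Y = C X\<close> and vectorise column by column. Since \<open>vec (M Y) = (I \<otimes> M) vec Y\<close>, the
equation becomes the absolute value equation \<open>R y + S |y| = vec F\<close> in \<open>\<real>^(n^2)\<close>, so it
suffices that \<open>y \<mapsto> R y + S |y|\<close> is bijective.

Each of (i)-(iii) implies (iv). Under (i), by multilinearity in the columns the determinant of
\<open>(R + S) F\<^sub>1 + (R - S) F\<^sub>2\<close> is a nonnegative, nonzero combination of determinants of column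
representatives. Condition (ii) is (i) for the pair \<open>I, (R + S)\<^sup>-\<^sup>1 (R - S)\<close>, multiplied by
\<open>R + S\<close>; and (iii) gives (ii), because the determinant of a column representative of
\<open>I, M\<close> is a principal minor of \<open>M\<close>.

Under (iv) the map is injective: \<open>|y| - |y'| = D (y - y')\<close> for a diagonal \<open>D\<close> with entries in
\<open>[-1, 1]\<close>, and \<open>R + S D = (R + S) (I + D)/2 + (R - S) (I - D)/2\<close> is invertible. A continuous,
injective, positively homogeneous map of \<open>\<real>^N\<close> to itself grows at least linearly, so its range
is closed; by invariance of domain the range is also open, hence all of \<open>\<real>^N\<close>.
\<close>

section \<open>Injective positively homogeneous maps\<close>

lemma norm_lower_bound_if_inj_positively_homogeneous:
  fixes g :: "'a::euclidean_space \<Rightarrow> 'b::real_normed_vector"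
  assumes cont: "continuous_on UNIV g" and "inj g"
    and hom: "\<And>t x. t \<ge> 0 \<Longrightarrow> g (t *\<^sub>R x) = t *\<^sub>R g x"
  obtains m where "m > 0" "\<And>x. m * norm x \<le> norm (g x)"
proof -
  have "continuous_on (sphere 0 1) (\<lambda>x. norm (g x))"
    by (intro continuous_on_norm continuous_on_subset[OF cont]) simp
  moreover have "sphere (0::'a) 1 \<noteq> {}"
    by simp
  ultimately obtain a where a: "a \<in> sphere 0 1"
    and min: "\<And>y. y \<in> sphere 0 1 \<Longrightarrow> norm (g a) \<le> norm (g y)"
    using continuous_attains_inf[OF compact_sphere] by blast
  have g0: "g 0 = 0"
    using hom[of 0 0] by simp
  have "a \<noteq> 0"
    using a by auto
  then have "g a \<noteq> g 0"
    using \<open>inj g\<close> by (simp add: inj_eq)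
  then have "norm (g a) > 0"
    by (simp add: g0)
  moreover have "norm (g a) * norm x \<le> norm (g x)" for x
  proof (cases "x = 0")
    case False
    then have "g x = norm x *\<^sub>R g (x /\<^sub>R norm x)"
      using hom[of "norm x" "x /\<^sub>R norm x"] by simp
    moreover have "norm (g a) \<le> norm (g (x /\<^sub>R norm x))"
      using False by (intro min) simp
    ultimately show ?thesis
      by (simp add: mult.commute mult_left_mono)
  qed (simp add: g0)
  ultimately show thesis
    by (rule that)
qed

lemma closed_range_if_norm_lower_bound:
  fixes g :: "'a::{real_normed_vector,heine_borel} \<Rightarrow> 'b::real_normed_vector"
  assumes cont: "continuous_on UNIV g" and "m > 0" and bound: "\<And>x. m * norm x \<le> norm (g x)"
  shows "closed (range g)"
proof -
  have "closure (range g) \<subseteq> range g"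
  proof
    fix y assume "y \<in> closure (range g)"
    define K where "K = (norm y + 1) / m"
    have "ball y 1 \<inter> range g \<subseteq> g ` cball 0 K"
    proof
      fix z assume "z \<in> ball y 1 \<inter> range g"
      then obtain x where "z = g x" "norm (g x - y) < 1"
        by (auto simp: dist_norm norm_minus_commute)
      then have "norm (g x) \<le> norm y + 1"
        using norm_triangle_ineq2[of "g x" y] by linarith
      with \<open>z = g x\<close> show "z \<in> g ` cball 0 K"
        using bound[of x] \<open>m > 0\<close> by (auto simp: K_def pos_le_divide_eq mult.commute)
    qed
    moreover have "closed (g ` cball 0 K)"
      by (intro compact_imp_closed compact_continuous_image continuous_on_subset[OF cont]) auto
    moreover have "y \<in> closure (ball y 1 \<inter> range g)"
      using open_Int_closure_subset[OF open_ball, of y 1 "range g"] \<open>y \<in> closure (range g)\<close>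
      by auto
    ultimately show "y \<in> range g"
      using closure_minimal by blast
  qed
  then show ?thesis
    by (simp add: closure_subset_eq)
qed

lemma surj_if_inj_positively_homogeneous:
  fixes g :: "'a::euclidean_space \<Rightarrow> 'a"
  assumes cont: "continuous_on UNIV g" and inj: "inj g"
    and hom: "\<And>t x. t \<ge> 0 \<Longrightarrow> g (t *\<^sub>R x) = t *\<^sub>R g x"
  shows "surj g"
proof -
  obtain m where "m > 0" "\<And>x. m * norm x \<le> norm (g x)"
    using norm_lower_bound_if_inj_positively_homogeneous[OF cont inj hom] by metis
  then have "closed (range g)"
    by (rule closed_range_if_norm_lower_bound[OF cont])
  moreover have "open (range g)"
    using invariance_of_domain[OF cont open_UNIV] inj by simp
  ultimately show ?thesis
    using clopen[of "range g"] by auto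
qed

section \<open>Column W-property and column mixtures\<close>

definition diag_mat :: "('n \<Rightarrow> real) \<Rightarrow> real^'n^'n" where
  "diag_mat d = (\<chi> i j. if i = j then d i else 0)"

lemma matrix_mul_diag_mat: "(M :: real^'n^'n) ** diag_mat d = (\<chi> i j. M $ i $ j * d j)"
  by (simp add: matrix_matrix_mult_def diag_mat_def vec_eq_iff if_distrib cong: if_cong)

lemma diag_mat_mult_vector: "diag_mat d *v x = (\<chi> i. d i * x $ i)"
  by (simp add: matrix_vector_mult_def diag_mat_def vec_eq_iff if_distrib[of "\<lambda>c. c * _"]
      cong: if_cong)

lemma nonneg_diagonal_eq_diag_mat: "nonneg_diagonal D \<Longrightarrow> D = diag_mat (\<lambda>i. D $ i $ i)"
  by (auto simp: nonneg_diagonal_def diag_mat_def vec_eq_iff)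

definition column_mixtures_invertible :: "real^'n^'n \<Rightarrow> real^'n^'n \<Rightarrow> bool" where
  "column_mixtures_invertible P Q \<longleftrightarrow>
     (\<forall>F1 F2. nonneg_diagonal F1 \<and> nonneg_diagonal F2 \<and> (\<forall>i. F1 $ i $ i + F2 $ i $ i > 0)
        \<longrightarrow> invertible (P ** F1 + Q ** F2))"

lemma column_mixtures_invertible_diag_mat:
  assumes "column_mixtures_invertible P Q"
    and "\<And>i. d1 i \<ge> 0" "\<And>i. d2 i \<ge> 0" "\<And>i. d1 i + d2 i > 0"
  shows "invertible (P ** diag_mat d1 + Q ** diag_mat d2)"
  using assms by (auto simp: column_mixtures_invertible_def nonneg_diagonal_def diag_mat_def)

lemma det_row_mixture_pos:
  fixes P Q :: "real^'n^'n"
  assumes W: "\<And>s. det (\<chi> i. if s i then P $ i else Q $ i) > 0"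
    and a: "\<And>i. a i \<ge> 0" and b: "\<And>i. b i \<ge> 0" and ab: "\<And>i. a i + b i > 0"
  shows "det (\<chi> i. a i *s P $ i + b i *s Q $ i) > 0"
proof -
  define mix where "mix K s = (\<chi> i. if i \<in> K then a i *s P $ i + b i *s Q $ i
                                     else if s i then P $ i else Q $ i)" for K s
  have "det (mix K s) > 0" if "finite K" for K s
    using that
  proof (induction K arbitrary: s rule: finite_induct)
    case empty
    then show ?case
      using W by (simp add: mix_def)
  next
    case (insert k K)
    let ?rows = "\<lambda>i. if i \<in> K then a i *s P $ i + b i *s Q $ i else if s i then P $ i else Q $ i"
    have "mix (insert k K) s = (\<chi> i. if i = k then a k *s P $ k + b k *s Q $ k else ?rows i)"
      by (simp add: mix_def vec_eq_iff)
    moreover have "(\<chi> i. if i = k then P $ k else ?rows i) = mix K (s(k := True))"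
      and "(\<chi> i. if i = k then Q $ k else ?rows i) = mix K (s(k := False))"
      using insert.hyps by (simp_all add: mix_def vec_eq_iff)
    ultimately have "det (mix (insert k K) s)
        = a k * det (mix K (s(k := True))) + b k * det (mix K (s(k := False)))"
      using det_row_add[of k "\<lambda>_. a k *s P $ k" "\<lambda>_. b k *s Q $ k" ?rows]
        det_row_mul[of k "a k" "\<lambda>_. P $ k" ?rows] det_row_mul[of k "b k" "\<lambda>_. Q $ k" ?rows]
      by simp
    moreover have "det (mix K (s(k := True))) > 0" "det (mix K (s(k := False))) > 0"
      using insert.IH by auto
    ultimately show ?case
      using a[of k] b[of k] ab[of k]
      by (smt (verit) mult_nonneg_nonneg mult_pos_pos)
  qed
  then have "det (mix UNIV s) > 0" for s
    by simp
  then show ?thesis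
    by (simp add: mix_def)
qed

lemma det_column_mixture_pos:
  fixes P Q :: "real^'n^'n"
  assumes "column_W_property P Q"
    and "\<And>j. d1 j \<ge> 0" "\<And>j. d2 j \<ge> 0" "\<And>j. d1 j + d2 j > 0"
  shows "det (P ** diag_mat d1 + Q ** diag_mat d2) > 0"
proof -
  have "det (\<chi> j. if s j then transpose P $ j else transpose Q $ j) > 0" for s
  proof -
    have "(\<chi> j. if s j then transpose P $ j else transpose Q $ j) = transpose (column_rep P Q s)"
      by (simp add: vec_eq_iff transpose_def column_rep_def)
    then show ?thesis
      using assms(1) by (simp add: column_W_property_def)
  qed
  then have "det (\<chi> j. d1 j *s transpose P $ j + d2 j *s transpose Q $ j) > 0"
    using det_row_mixture_pos assms(2-4) by blast
  moreover have "(\<chi> j. d1 j *s transpose P $ j + d2 j *s transpose Q $ j)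
      = transpose (P ** diag_mat d1 + Q ** diag_mat d2)"
    by (simp add: vec_eq_iff transpose_def matrix_mul_diag_mat mult.commute)
  ultimately show ?thesis
    by simp
qed

lemma column_W_property_imp_column_mixtures_invertible:
  fixes P Q :: "real^'n^'n"
  assumes "column_W_property P Q"
  shows "column_mixtures_invertible P Q"
  unfolding column_mixtures_invertible_def
proof (intro allI impI, elim conjE)
  fix F1 F2 :: "real^'n^'n"
  assume F: "nonneg_diagonal F1" "nonneg_diagonal F2" "\<forall>i. F1 $ i $ i + F2 $ i $ i > 0"
  have "det (P ** diag_mat (\<lambda>i. F1 $ i $ i) + Q ** diag_mat (\<lambda>i. F2 $ i $ i)) > 0"
    using F by (intro det_column_mixture_pos[OF assms]) (auto simp: nonneg_diagonal_def)
  then have "det (P ** F1 + Q ** F2) > 0"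
    unfolding nonneg_diagonal_eq_diag_mat[OF F(1), symmetric]
      nonneg_diagonal_eq_diag_mat[OF F(2), symmetric] .
  then show "invertible (P ** F1 + Q ** F2)"
    by (simp add: invertible_det_nz)
qed

lemma matrix_mul_matrix_inv:
  fixes M :: "real^'n^'n"
  assumes "invertible M"
  shows "M ** matrix_inv M = mat 1" and "matrix_inv M ** M = mat 1"
  using someI_ex[OF assms[unfolded invertible_def]] by (simp_all add: matrix_inv_def)

lemma column_mixtures_invertible_if_column_W_property_mat_1:
  fixes P Q :: "real^'n^'n"
  assumes inv: "invertible P" and W: "column_W_property (mat 1) (matrix_inv P ** Q)"
  shows "column_mixtures_invertible P Q"
  unfolding column_mixtures_invertible_def
proof (intro allI impI)
  fix F1 F2 :: "real^'n^'n"
  assume "nonneg_diagonal F1 \<and> nonneg_diagonal F2 \<and> (\<forall>i. F1 $ i $ i + F2 $ i $ i > 0)"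
  then have "invertible (mat 1 ** F1 + (matrix_inv P ** Q) ** F2)"
    using column_W_property_imp_column_mixtures_invertible[OF W]
    by (simp add: column_mixtures_invertible_def)
  moreover have "P ** (mat 1 ** F1 + (matrix_inv P ** Q) ** F2) = P ** F1 + Q ** F2"
    using matrix_mul_matrix_inv[OF inv] by (simp add: matrix_add_ldistrib matrix_mul_assoc)
  ultimately show "invertible (P ** F1 + Q ** F2)"
    using inv by (metis invertible_mult)
qed

lemma det_column_rep_mat_1:
  fixes M :: "real^'n^'n"
  shows "det (column_rep (mat 1) M s) = principal_minor M {j. \<not> s j}"
proof -
  let ?J = "{j. \<not> s j}"
  let ?N = "column_rep (mat 1) M s"
  let ?term = "\<lambda>p. of_int (sign p) * (\<Prod>i\<in>UNIV. ?N $ i $ p i)"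
  have vanish: "?term p = 0" if p: "p permutes UNIV" "\<not> p permutes ?J" for p
  proof -
    obtain x where "x \<notin> ?J" "p x \<noteq> x"
      using permutes_superset[OF p(1), of ?J] p(2) by blast
    moreover obtain i where "p i = x"
      using p(1) by (metis permutes_univ)
    ultimately have "?N $ i $ p i = 0"
      by (auto simp: column_rep_def mat_def)
    then show ?thesis
      by (metis UNIV_I finite mult_eq_0_iff prod_zero_iff)
  qed
  have restrict: "?term p = of_int (sign p) * (\<Prod>i\<in>?J. M $ i $ p i)" if "p permutes ?J" for p
  proof -
    have "(\<Prod>i\<in>UNIV - ?J. ?N $ i $ p i) = 1"
      using that by (intro prod.neutral) (auto simp: permutes_def column_rep_def mat_def)
    moreover have "(\<Prod>i\<in>?J. ?N $ i $ p i) = (\<Prod>i\<in>?J. M $ i $ p i)"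
      using that by (intro prod.cong) (auto simp: column_rep_def dest: permutes_in_image[THEN iffD2])
    ultimately show ?thesis
      by (metis (no_types, lifting) finite prod.subset_diff subset_UNIV mult.commute mult_1)
  qed
  have "det ?N = sum ?term {p. p permutes UNIV}"
    by (simp add: det_def)
  also have "\<dots> = sum ?term {p. p permutes ?J}"
    using vanish by (intro sum.mono_neutral_right) (auto intro: permutes_subset)
  also have "\<dots> = principal_minor M ?J"
    unfolding principal_minor_def by (intro sum.cong) (auto simp: restrict)
  finally show ?thesis .
qed

lemma P_matrix_imp_column_W_property_mat_1:
  fixes M :: "real^'n^'n"
  assumes "P_matrix M"
  shows "column_W_property (mat 1) M"
proof -
  have "principal_minor M J > 0" for J
    using assms by (cases "J = {}") (simp_all add: P_matrix_def principal_minor_def)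
  then show ?thesis
    by (simp add: column_W_property_def det_column_rep_mat_1)
qed

section \<open>Absolute value equations\<close>

definition vabs :: "real^'n \<Rightarrow> real^'n" where
  "vabs x = (\<chi> i. \<bar>x $ i\<bar>)"

lemma abs_diff_eq_mult_diff:
  fixes a b :: real
  obtains t where "\<bar>t\<bar> \<le> 1" "\<bar>a\<bar> - \<bar>b\<bar> = t * (a - b)"
proof (cases "a = b")
  case True
  then show thesis
    using that[of 0] by simp
next
  case False
  show thesis
  proof
    show "\<bar>(\<bar>a\<bar> - \<bar>b\<bar>) / (a - b)\<bar> \<le> 1"
      using False abs_triangle_ineq3[of a b] by (simp add: divide_le_eq_1)
  qed (use False in simp)
qed

lemma invertible_add_mult_diag_mat:
  fixes R S :: "real^'n^'n"
  assumes "column_mixtures_invertible (R + S) (R - S)" and "\<And>i. \<bar>t i\<bar> \<le> 1"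
  shows "invertible (R + S ** diag_mat t)"
proof -
  have "R + S ** diag_mat t
      = (R + S) ** diag_mat (\<lambda>i. (1 + t i) / 2) + (R - S) ** diag_mat (\<lambda>i. (1 - t i) / 2)"
    by (simp add: matrix_mul_diag_mat vec_eq_iff field_simps)
  moreover have "0 \<le> 1 + t i" "0 \<le> 1 - t i" for i
    using assms(2)[of i] by linarith+
  then have "invertible
      ((R + S) ** diag_mat (\<lambda>i. (1 + t i) / 2) + (R - S) ** diag_mat (\<lambda>i. (1 - t i) / 2))"
    using assms(1) by (intro column_mixtures_invertible_diag_mat) (simp_all add: field_simps)
  ultimately show ?thesis
    by simp
qed

lemma inj_linear_abs_map:
  fixes R S :: "real^'n^'n"
  assumes mix: "column_mixtures_invertible (R + S) (R - S)"
  shows "inj (\<lambda>x. R *v x + S *v vabs x)"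
proof (rule injI)
  fix x y :: "real^'n"
  assume eq: "R *v x + S *v vabs x = R *v y + S *v vabs y"
  have "\<exists>t. \<forall>i. \<bar>t i\<bar> \<le> 1 \<and> \<bar>x $ i\<bar> - \<bar>y $ i\<bar> = t i * (x $ i - y $ i)"
    by (rule choice) (meson abs_diff_eq_mult_diff)
  then obtain t where t: "\<And>i. \<bar>t i\<bar> \<le> 1" "\<And>i. \<bar>x $ i\<bar> - \<bar>y $ i\<bar> = t i * (x $ i - y $ i)"
    by blast
  have "vabs x - vabs y = diag_mat t *v (x - y)"
    using t(2) by (simp add: vabs_def diag_mat_mult_vector vec_eq_iff)
  moreover have "R *v (x - y) + S *v (vabs x - vabs y) = 0"
    using eq by (simp add: matrix_vector_mult_diff_distrib flip: add_diff_add)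
  ultimately have "(R + S ** diag_mat t) *v (x - y) = (R + S ** diag_mat t) *v 0"
    by (simp add: matrix_vector_mult_add_rdistrib flip: matrix_vector_mul_assoc)
  moreover have "invertible (R + S ** diag_mat t)"
    using mix t(1) by (rule invertible_add_mult_diag_mat)
  ultimately have "x - y = 0"
    using inj_matrix_vector_mult injD by metis
  then show "x = y"
    by simp
qed

lemma bij_linear_abs_map:
  fixes R S :: "real^'n^'n"
  assumes "column_mixtures_invertible (R + S) (R - S)"
  shows "bij (\<lambda>x. R *v x + S *v vabs x)"
proof -
  have "continuous_on UNIV vabs"
    unfolding vabs_def by (intro continuous_intros)
  then have cont: "continuous_on UNIV (\<lambda>x. R *v x + S *v vabs x)"
    by (intro continuous_intros continuous_on_compose2[OF matrix_vector_mult_linear_continuous_on]) auto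
  have hom: "R *v (c *\<^sub>R x) + S *v vabs (c *\<^sub>R x) = c *\<^sub>R (R *v x + S *v vabs x)"
    if "c \<ge> 0" for c x
  proof -
    have "vabs (c *\<^sub>R x) = c *\<^sub>R vabs x"
      using that by (simp add: vabs_def vec_eq_iff abs_mult)
    then show ?thesis
      by (simp add: matrix_vector_mult_scaleR scaleR_right_distrib)
  qed
  show ?thesis
    using inj_linear_abs_map[OF assms]
      surj_if_inj_positively_homogeneous[OF cont inj_linear_abs_map[OF assms] hom]
    by (rule bijI)
qed

section \<open>Vectorisation\<close>

text \<open>Column-major stacking: the entry \<open>D\<^sub>i\<^sub>j\<close> sits at index \<open>(j, i)\<close>, matching the index
  order of \<open>kron\<close>.\<close>

definition vec_mat :: "real^'n^'n \<Rightarrow> real^('n \<times> 'n)" where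
  "vec_mat D = (\<chi> p. D $ snd p $ fst p)"

lemma bij_vec_mat: "bij vec_mat"
proof (rule o_bij)
  show "(\<lambda>v. \<chi> i j. v $ (j, i)) \<circ> vec_mat = id"
    and "vec_mat \<circ> (\<lambda>v. \<chi> i j. v $ (j, i)) = id"
    by (auto simp: vec_mat_def vec_eq_iff)
qed

lemma vec_mat_add: "vec_mat (D + E) = vec_mat D + vec_mat E"
  by (simp add: vec_mat_def vec_eq_iff case_prod_beta)

lemma vec_mat_mabs: "vec_mat (mabs D) = vabs (vec_mat D)"
  by (simp add: vec_mat_def vabs_def mabs_def vec_eq_iff case_prod_beta)

lemma kron_mat_1_mult_vec_mat:
  fixes M D :: "real^'n^'n"
  shows "kron (mat 1) M *v vec_mat D = vec_mat (M ** D)"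
proof -
  have "(\<Sum>q\<in>UNIV. (mat 1 $ j $ fst q * M $ i $ snd q) * D $ snd q $ fst q)
      = (\<Sum>l\<in>UNIV. M $ i $ l * D $ l $ j)" for i j :: 'n
  proof -
    have "(\<Sum>q\<in>UNIV. (mat 1 $ j $ fst q * M $ i $ snd q) * D $ snd q $ fst q)
        = (\<Sum>j'\<in>UNIV. \<Sum>l\<in>UNIV. (mat 1 $ j $ j' * M $ i $ l) * D $ l $ j')"
      unfolding UNIV_Times_UNIV[symmetric] sum.cartesian_product by (simp add: case_prod_unfold)
    also have "\<dots> = (\<Sum>j'\<in>UNIV. mat 1 $ j $ j' * (\<Sum>l\<in>UNIV. M $ i $ l * D $ l $ j'))"
      by (simp add: sum_distrib_left mult.assoc)
    also have "\<dots> = (\<Sum>l\<in>UNIV. M $ i $ l * D $ l $ j)"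
      by (simp add: mat_def if_distrib[of "\<lambda>c. c * _"] cong: if_cong)
    finally show ?thesis .
  qed
  then show ?thesis
    by (simp add: vec_eq_iff kron_def vec_mat_def matrix_vector_mult_def matrix_matrix_mult_def)
qed

lemma bij_matrix_mult_invertible:
  fixes C :: "real^'n^'n"
  assumes "invertible C"
  shows "bij (\<lambda>X :: real^'n^'n. C ** X)"
proof (rule o_bij)
  show "(\<lambda>X. matrix_inv C ** X) \<circ> (\<lambda>X. C ** X) = id"
    and "(\<lambda>X. C ** X) \<circ> (\<lambda>X. matrix_inv C ** X) = id"
    using matrix_mul_matrix_inv[OF assms] by (auto simp: matrix_mul_assoc)
qed

lemma vec_mat_abs_matrix_equation:
  fixes A B C X :: "real^'n^'n"
  assumes "invertible C"
  shows "vec_mat (A ** X + B ** mabs (C ** X))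
      = kron (mat 1) (A ** matrix_inv C) *v vec_mat (C ** X)
        + kron (mat 1) B *v vabs (vec_mat (C ** X))"
proof -
  have "A ** X = A ** ((matrix_inv C ** C) ** X)"
    using matrix_mul_matrix_inv(2)[OF assms] by simp
  also have "\<dots> = (A ** matrix_inv C) ** (C ** X)"
    by (simp only: matrix_mul_assoc)
  finally have A_split: "A ** X = (A ** matrix_inv C) ** (C ** X)" .
  show ?thesis
    by (subst A_split) (simp add: vec_mat_add kron_mat_1_mult_vec_mat flip: vec_mat_mabs)
qed

theorem theorem4p3:
  fixes A B C F :: "real^'n^'n"
  defines "R \<equiv> kron (mat 1 :: real^'n^'n) (A ** matrix_inv C)"
      and "S \<equiv> kron (mat 1 :: real^'n^'n) B"
  assumes invC: "invertible C"
    and conds: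
      "column_W_property (R + S) (R - S)
       \<or> (invertible (R + S) \<and>
          column_W_property (mat 1) (matrix_inv (R + S) ** (R - S)))
       \<or> (invertible (R + S) \<and> P_matrix (matrix_inv (R + S) ** (R - S)))
       \<or> (\<forall>F1 F2 :: real^('n \<times> 'n)^('n \<times> 'n).
            nonneg_diagonal F1 \<and> nonneg_diagonal F2 \<and> (\<forall>i. F1 $ i $ i + F2 $ i $ i > 0)
            \<longrightarrow> invertible ((R + S) ** F1 + (R - S) ** F2))"
  shows "\<exists>!X :: real^'n^'n. A ** X + B ** mabs (C ** X) = F"
proof -
  have "column_mixtures_invertible (R + S) (R - S)"
    using conds column_W_property_imp_column_mixtures_invertible[of "R + S" "R - S"]
      column_mixtures_invertible_if_column_W_property_mat_1[of "R + S" "R - S"]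
      P_matrix_imp_column_W_property_mat_1[of "matrix_inv (R + S) ** (R - S)"]
    unfolding column_mixtures_invertible_def[of "R + S" "R - S"] by blast
  then have "bij ((\<lambda>x. R *v x + S *v vabs x) \<circ> vec_mat \<circ> (\<lambda>X. C ** X))"
    using bij_linear_abs_map bij_vec_mat bij_matrix_mult_invertible[OF invC] by (intro bij_comp)
  then have "\<exists>!X. R *v vec_mat (C ** X) + S *v vabs (vec_mat (C ** X)) = vec_mat F"
    by (simp add: bij_iff)
  then show ?thesis
    by (simp add: R_def S_def inj_eq[OF bij_is_inj[OF bij_vec_mat]]
        flip: vec_mat_abs_matrix_equation[OF invC])
qed

end
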